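(* Let $1\le p<\infty$, $\alpha>0$, $m>0$. The Hardy operator $Hf(z)=\frac1z\int_0^zf(w)\,dw$ is bounded on $\mathcal{F}^p_{(\alpha,m)}$ with $\|H\|=1$, and $H$ is power bounded and uniformly mean ergodic on $\mathcal{F}^p_{(\alpha,m)}$.
   Context: For $\alpha>0$, $m>0$ and $1\le p<\infty$, $\mathcal{F}^p_{(\alpha,m)}$ denotes the Banach space of entire functions $f$ on $\mathbb{C}$ with $\|f\|_{(p,\alpha,m)}^p=\int_{\mathbb{C}}|f(z)|^pe^{-p\alpha|z|^m}\,dA(z)<\infty$, where $dA$ is Lebesgue area measure. In the definition of $H$, $Hf(0)$ is understood as $f(0)$ (the removable singularity). A bounded operator $T$ is power bounded if $\sup_{n\ge0}\|T^n\|<\infty$, and uniformly mean ergodic if $\frac1n\sum_{k=1}^nT^k$ converges in operator norm as $n\to\infty$. *)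

theory Defs
  imports "HOL-Complex_Analysis.Complex_Analysis"
begin

definition fock_integrand :: "real \<Rightarrow> real \<Rightarrow> real \<Rightarrow> (complex \<Rightarrow> complex) \<Rightarrow> complex \<Rightarrow> real" where
  "fock_integrand p \<alpha> m f z = norm (f z) powr p * exp (- p * \<alpha> * norm z powr m)"

definition fock_space :: "real \<Rightarrow> real \<Rightarrow> real \<Rightarrow> (complex \<Rightarrow> complex) set" where
  "fock_space p \<alpha> m = {f. f holomorphic_on UNIV \<and> integrable lborel (fock_integrand p \<alpha> m f)}"

definition fock_norm :: "real \<Rightarrow> real \<Rightarrow> real \<Rightarrow> (complex \<Rightarrow> complex) \<Rightarrow> real" where
  "fock_norm p \<alpha> m f = (integral\<^sup>L lborel (fock_integrand p \<alpha> m f)) powr (1 / p)"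

definition fock_bounded_op :: "real \<Rightarrow> real \<Rightarrow> real \<Rightarrow> ((complex \<Rightarrow> complex) \<Rightarrow> (complex \<Rightarrow> complex)) \<Rightarrow> bool" where
  "fock_bounded_op p \<alpha> m T \<longleftrightarrow>
     (\<forall>f \<in> fock_space p \<alpha> m. T f \<in> fock_space p \<alpha> m) \<and>
     (\<forall>f \<in> fock_space p \<alpha> m. \<forall>g \<in> fock_space p \<alpha> m. \<forall>a b :: complex.
        T (\<lambda>z. a * f z + b * g z) = (\<lambda>z. a * T f z + b * T g z)) \<and>
     (\<exists>C. \<forall>f \<in> fock_space p \<alpha> m. fock_norm p \<alpha> m (T f) \<le> C * fock_norm p \<alpha> m f)"

definition fock_opnorm :: "real \<Rightarrow> real \<Rightarrow> real \<Rightarrow> ((complex \<Rightarrow> complex) \<Rightarrow> (complex \<Rightarrow> complex)) \<Rightarrow> real" where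
  "fock_opnorm p \<alpha> m T =
     Inf {C. 0 \<le> C \<and> (\<forall>f \<in> fock_space p \<alpha> m. fock_norm p \<alpha> m (T f) \<le> C * fock_norm p \<alpha> m f)}"

definition hardy_op :: "(complex \<Rightarrow> complex) \<Rightarrow> complex \<Rightarrow> complex" where
  "hardy_op f z = (if z = 0 then f 0 else contour_integral (linepath 0 z) f / z)"

definition power_bounded :: "real \<Rightarrow> real \<Rightarrow> real \<Rightarrow> ((complex \<Rightarrow> complex) \<Rightarrow> (complex \<Rightarrow> complex)) \<Rightarrow> bool" where
  "power_bounded p \<alpha> m T \<longleftrightarrow> fock_bounded_op p \<alpha> m T \<and> bdd_above (range (\<lambda>n. fock_opnorm p \<alpha> m (T ^^ n)))"

definition cesaro_mean :: "((complex \<Rightarrow> complex) \<Rightarrow> (complex \<Rightarrow> complex)) \<Rightarrow> nat \<Rightarrow> (complex \<Rightarrow> complex) \<Rightarrow> complex \<Rightarrow> complex" where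
  "cesaro_mean T n f = (\<lambda>z. (\<Sum>k=1..n. (T ^^ k) f z) / of_nat n)"

definition uniformly_mean_ergodic :: "real \<Rightarrow> real \<Rightarrow> real \<Rightarrow> ((complex \<Rightarrow> complex) \<Rightarrow> (complex \<Rightarrow> complex)) \<Rightarrow> bool" where
  "uniformly_mean_ergodic p \<alpha> m T \<longleftrightarrow> fock_bounded_op p \<alpha> m T \<and>
     (\<exists>L. fock_bounded_op p \<alpha> m L \<and>
        (\<lambda>n. fock_opnorm p \<alpha> m (\<lambda>f z. cesaro_mean T n f z - L f z)) \<longlonglongrightarrow> 0)"

end

theory Submission
  imports Defs "HOL-Probability.Sinc_Integral"
begin

text \<open>
  Write \<open>H f z = \<integral>\<^sub>0\<^sup>1 f (t z) dt\<close>. By Jensen's inequality \<open>\<parallel>H f\<parallel>\<^sup>p \<le> \<integral>\<^sub>0\<^sup>1 \<parallel>f\<^sub>t\<parallel>\<^sup>p dt\<close>,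
  where \<open>f\<^sub>t z = f (t z)\<close>. For a radial weight the dilations contract, \<open>\<parallel>f\<^sub>t\<parallel> \<le> \<parallel>f\<parallel>\<close>:
  by the Poisson formula and Jensen, \<open>\<bar>f (t z)\<bar>\<^sup>p\<close> is dominated by the Poisson average of
  \<open>\<bar>f\<bar>\<^sup>p\<close> over the circle of radius \<open>\<bar>z\<bar>\<close>, and integrating against the rotation-invariant
  measure \<open>w dA\<close> removes the average. Hence \<open>\<parallel>H\<^sup>n\<parallel> \<le> 1\<close>, with equality on constants.
  If \<open>f 0 = 0\<close> then \<open>f (t z) = t z q (t z)\<close> improves this to \<open>\<parallel>f\<^sub>t\<parallel>\<^sup>p \<le> t\<^sup>p \<parallel>f\<parallel>\<^sup>p\<close>, so
  \<open>H\<close> contracts \<open>{f. f 0 = 0}\<close> by the factor \<open>1 / (p + 1)\<close> in \<open>\<parallel>_\<parallel>\<^sup>p\<close>. Since \<open>H\<close> fixes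
  constants, the Cesaro means converge in operator norm to \<open>f \<mapsto> f 0\<close>, at rate \<open>n powr (- 1 / p)\<close>.
\<close>

section \<open>Lebesgue measure on the complex plane\<close>

lemma borel_measurable_Complex [measurable]:
  assumes [measurable]: "f \<in> borel_measurable M" "g \<in> borel_measurable M"
  shows "(\<lambda>x. Complex (f x) (g x)) \<in> borel_measurable M"
proof -
  have "(\<lambda>x. Complex (f x) (g x)) = (\<lambda>x. complex_of_real (f x) + \<i> * complex_of_real (g x))"
    by (auto simp: complex_eq_iff)
  then show ?thesis by simp
qed

lemma lborel_complex_eq_distr_pair:
  "(lborel :: complex measure) = distr (lborel \<Otimes>\<^sub>M lborel) borel (\<lambda>(x, y). Complex x y)"
proof (rule lborel_eqI)
  fix l u :: complex
  assume le: "\<And>b. b \<in> Basis \<Longrightarrow> l \<bullet> b \<le> u \<bullet> b"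
  have "Re l \<le> Re u" "Im l \<le> Im u"
    using le[of 1] le[of \<i>] by (auto simp: Basis_complex_def inner_complex_def)
  moreover have "(\<lambda>(x, y). Complex x y) -` box l u \<inter> space (lborel \<Otimes>\<^sub>M lborel)
      = {Re l<..<Re u} \<times> {Im l<..<Im u}"
    by (auto simp: box_def Basis_complex_def inner_complex_def space_pair_measure)
  ultimately show "emeasure (distr (lborel \<Otimes>\<^sub>M lborel) borel (\<lambda>(x, y). Complex x y)) (box l u)
      = (\<Prod>b\<in>Basis. (u - l) \<bullet> b)"
    by (simp add: emeasure_distr lborel.emeasure_pair_measure_Times ennreal_mult
                  Basis_complex_def inner_complex_def)
qed simp

lemma nn_integral_lborel_complex:
  fixes F :: "complex \<Rightarrow> ennreal"
  assumes [measurable]: "F \<in> borel_measurable borel"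
  shows "(\<integral>\<^sup>+ z. F z \<partial>lborel) = (\<integral>\<^sup>+ x. \<integral>\<^sup>+ y. F (Complex x y) \<partial>lborel \<partial>lborel)"
  using lborel.nn_integral_fst[of "\<lambda>(x, y). F (Complex x y)" lborel]
  by (subst lborel_complex_eq_distr_pair) (simp add: nn_integral_distr case_prod_unfold)

lemma nn_integral_lborel_complex_shear_Re:
  fixes F :: "complex \<Rightarrow> ennreal"
  assumes [measurable]: "F \<in> borel_measurable borel"
  shows "(\<integral>\<^sup>+ z. F (z + of_real (a * Im z)) \<partial>lborel) = (\<integral>\<^sup>+ z. F z \<partial>lborel)"
proof -
  have "(\<integral>\<^sup>+ z. F (z + of_real (a * Im z)) \<partial>lborel)
      = (\<integral>\<^sup>+ x. \<integral>\<^sup>+ y. F (Complex (x + a * y) y) \<partial>lborel \<partial>lborel)"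
    by (subst nn_integral_lborel_complex) (auto intro!: nn_integral_cong arg_cong[where f=F] simp: complex_eq_iff)
  also have "\<dots> = (\<integral>\<^sup>+ y. \<integral>\<^sup>+ x. F (Complex (x + a * y) y) \<partial>lborel \<partial>lborel)"
    by (rule lborel_pair.Fubini'[symmetric]) measurable
  also have "\<dots> = (\<integral>\<^sup>+ y. \<integral>\<^sup>+ x. F (Complex x y) \<partial>lborel \<partial>lborel)"
  proof (rule nn_integral_cong)
    show "(\<integral>\<^sup>+ x. F (Complex (x + a * y) y) \<partial>lborel) = (\<integral>\<^sup>+ x. F (Complex x y) \<partial>lborel)" for y
      using nn_integral_real_affine[of "\<lambda>x. F (Complex x y)" 1 "a * y"] by (simp add: add.commute)
  qed
  also have "\<dots> = (\<integral>\<^sup>+ x. \<integral>\<^sup>+ y. F (Complex x y) \<partial>lborel \<partial>lborel)"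
    by (rule lborel_pair.Fubini') measurable
  finally show ?thesis
    by (simp add: nn_integral_lborel_complex)
qed

lemma nn_integral_lborel_complex_shear_Im:
  fixes F :: "complex \<Rightarrow> ennreal"
  assumes [measurable]: "F \<in> borel_measurable borel"
  shows "(\<integral>\<^sup>+ z. F (z + \<i> * of_real (b * Re z)) \<partial>lborel) = (\<integral>\<^sup>+ z. F z \<partial>lborel)"
proof -
  have "(\<integral>\<^sup>+ z. F (z + \<i> * of_real (b * Re z)) \<partial>lborel)
      = (\<integral>\<^sup>+ x. \<integral>\<^sup>+ y. F (Complex x (y + b * x)) \<partial>lborel \<partial>lborel)"
    by (subst nn_integral_lborel_complex) (auto intro!: nn_integral_cong arg_cong[where f=F] simp: complex_eq_iff)
  also have "\<dots> = (\<integral>\<^sup>+ x. \<integral>\<^sup>+ y. F (Complex x y) \<partial>lborel \<partial>lborel)"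
  proof (rule nn_integral_cong)
    show "(\<integral>\<^sup>+ y. F (Complex x (y + b * x)) \<partial>lborel) = (\<integral>\<^sup>+ y. F (Complex x y) \<partial>lborel)" for x
      using nn_integral_real_affine[of "\<lambda>y. F (Complex x y)" 1 "b * x"] by (simp add: add.commute)
  qed
  finally show ?thesis
    by (simp add: nn_integral_lborel_complex)
qed

text \<open>Paeth's decomposition of a rotation into three shears, each of which preserves Lebesgue
  measure by Fubini's theorem.\<close>
lemma mult_unimodular_eq_shears:
  fixes c z :: complex
  assumes c: "norm c = 1" "Im c \<noteq> 0"
  defines "a \<equiv> (Re c - 1) / Im c"
  defines "S \<equiv> \<lambda>z. z + of_real (a * Im z)"
  defines "T \<equiv> \<lambda>z. z + \<i> * of_real (Im c * Re z)"
  shows "c * z = S (T (S z))"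
proof -
  have "(Re c)\<^sup>2 + (Im c)\<^sup>2 = 1"
    using c(1) by (simp add: cmod_def)
  then have "a * (2 + a * Im c) = - Im c"
    using c(2) by (simp add: a_def field_simps power2_eq_square) (metis distrib_left mult.commute mult_1_right)
  moreover have "1 + a * Im c = Re c"
    using c(2) by (simp add: a_def field_simps)
  moreover have "Re (S (T (S z))) = (1 + a * Im c) * Re z + a * (2 + a * Im c) * Im z"
    and "Im (S (T (S z))) = Im c * Re z + (1 + a * Im c) * Im z"
    by (simp_all add: S_def T_def algebra_simps)
  ultimately show ?thesis
    by (simp add: complex_eq_iff)
qed

lemma nn_integral_lborel_complex_rotate:
  fixes F :: "complex \<Rightarrow> ennreal" and c :: complex
  assumes [measurable]: "F \<in> borel_measurable borel" and c: "norm c = 1"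
  shows "(\<integral>\<^sup>+ z. F (c * z) \<partial>lborel) = (\<integral>\<^sup>+ z. F z \<partial>lborel)"
proof -
  have rotate: "(\<integral>\<^sup>+ z. G (c * z) \<partial>lborel) = (\<integral>\<^sup>+ z. G z \<partial>lborel)"
    if [measurable]: "G \<in> borel_measurable borel" and c: "norm c = 1" "Im c \<noteq> 0" for G c
  proof -
    define a where "a = (Re c - 1) / Im c"
    define S where "S = (\<lambda>z. z + of_real (a * Im z))"
    define T where "T = (\<lambda>z. z + \<i> * of_real (Im c * Re z))"
    have [measurable]: "S \<in> borel_measurable borel" "T \<in> borel_measurable borel"
      unfolding S_def T_def by measurable
    have "(\<integral>\<^sup>+ z. G (c * z) \<partial>lborel) = (\<integral>\<^sup>+ z. G (S (T (S z))) \<partial>lborel)"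
      using mult_unimodular_eq_shears[OF c] by (simp add: a_def S_def T_def)
    also have "\<dots> = (\<integral>\<^sup>+ z. G (S (T z)) \<partial>lborel)"
      using nn_integral_lborel_complex_shear_Re[of "\<lambda>z. G (S (T z))" a] by (simp add: S_def)
    also have "\<dots> = (\<integral>\<^sup>+ z. G (S z) \<partial>lborel)"
      using nn_integral_lborel_complex_shear_Im[of "\<lambda>z. G (S z)" "Im c"] by (simp add: T_def)
    also have "\<dots> = (\<integral>\<^sup>+ z. G z \<partial>lborel)"
      using nn_integral_lborel_complex_shear_Re[of G a] by (simp add: S_def)
    finally show ?thesis .
  qed
  show ?thesis
  proof (cases "Im c = 0")
    case True
    then have "c = 1 \<or> c = \<i> * \<i>"
      using c by (auto simp: complex_eq_iff cmod_def)
    moreover have "(\<integral>\<^sup>+ z. F (\<i> * (\<i> * z)) \<partial>lborel) = (\<integral>\<^sup>+ z. F z \<partial>lborel)"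
      using rotate[of "\<lambda>z. F (\<i> * z)" \<i>] rotate[of F \<i>] by simp
    ultimately show ?thesis
      by (auto simp: mult.assoc)
  qed (use rotate c in auto)
qed

lemma nn_integral_rotation_average:
  fixes K :: "real \<Rightarrow> ennreal" and F :: "complex \<Rightarrow> ennreal" and \<rho> :: "real \<Rightarrow> complex"
  assumes [measurable]: "K \<in> borel_measurable borel" "F \<in> borel_measurable borel" "\<rho> \<in> borel_measurable borel"
    and K: "(\<integral>\<^sup>+ s. K s \<partial>lborel) = 1" and \<rho>: "\<And>s. norm (\<rho> s) = 1"
  shows "(\<integral>\<^sup>+ z. \<integral>\<^sup>+ s. K s * F (\<rho> s * z) \<partial>lborel \<partial>lborel) = (\<integral>\<^sup>+ z. F z \<partial>lborel)"
proof -
  have "(\<integral>\<^sup>+ z. \<integral>\<^sup>+ s. K s * F (\<rho> s * z) \<partial>lborel \<partial>lborel)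
      = (\<integral>\<^sup>+ s. \<integral>\<^sup>+ z. K s * F (\<rho> s * z) \<partial>lborel \<partial>lborel)"
    by (rule lborel_pair.Fubini') measurable
  also have "\<dots> = (\<integral>\<^sup>+ s. K s * (\<integral>\<^sup>+ z. F z \<partial>lborel) \<partial>lborel)"
    using nn_integral_lborel_complex_rotate[OF _ \<rho>] by (simp add: nn_integral_cmult)
  also have "\<dots> = (\<integral>\<^sup>+ z. F z \<partial>lborel)"
    by (simp add: nn_integral_multc K)
  finally show ?thesis .
qed

lemma borel_measurable_cis [measurable]: "cis \<in> borel_measurable borel"
  by (intro borel_measurable_continuous_onI continuous_intros)

lemma borel_measurable_holomorphic:
  "f holomorphic_on UNIV \<Longrightarrow> f \<in> borel_measurable borel"
  by (intro borel_measurable_continuous_onI holomorphic_on_imp_continuous_on)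

lemma nn_integral_lborel_pos:
  fixes g :: "'a::euclidean_space \<Rightarrow> real"
  assumes [measurable]: "g \<in> borel_measurable borel" and g: "\<And>x. g x > 0"
  shows "(\<integral>\<^sup>+ x. ennreal (g x) \<partial>lborel) > 0"
proof -
  have "\<not> (AE x in lborel. ennreal (g x) \<le> 0)"
  proof
    assume "AE x in lborel. ennreal (g x) \<le> 0"
    then have "AE x in (lborel :: 'a measure). False"
      by eventually_elim (metis ennreal_eq_0_iff g le_zero_eq leD)
    then show False
      using ae_filter_eq_bot_iff[of "lborel :: 'a measure"] trivial_limit_def by force
  qed
  then show ?thesis
    using nn_integral_less[of "\<lambda>_. 0" lborel "\<lambda>x. ennreal (g x)"] by simp
qed

lemma power_mult_exp_neg_powr_bounded:
  fixes c m :: real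
  assumes c: "c > 0" and m: "m > 0"
  obtains K where "\<And>r. r \<ge> 0 \<Longrightarrow> r ^ n * exp (- c * r powr m) \<le> K"
proof
  define k :: nat where "k = nat \<lceil>n / m\<rceil> + 1"
  have "real k \<ge> n / m"
    unfolding k_def by linarith
  then have k: "k > 0" "n \<le> m * k"
    using m by (auto simp: k_def field_simps)
  fix r :: real
  assume r: "r \<ge> 0"
  show "r ^ n * exp (- c * r powr m) \<le> max 1 ((k / c) ^ k)"
  proof (cases "r \<le> 1")
    case True
    then have "r ^ n * exp (- c * r powr m) \<le> 1 * 1"
      using c r by (intro mult_mono power_le_one) auto
    then show ?thesis by simp
  next
    case False
    define u where "u = c * r powr m"
    have u: "u \<ge> 0"
      using c by (simp add: u_def)
    have "(c / k) ^ k * r ^ n \<le> (c / k) ^ k * r powr (m * k)"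
      using False c k by (auto simp flip: powr_realpow intro!: powr_mono)
    also have "\<dots> = (u / k) ^ k"
      using False by (simp add: u_def power_divide power_mult_distrib powr_powr flip: powr_realpow)
    also have "\<dots> \<le> (1 + u / k) ^ k"
      using u by (intro power_mono) auto
    also have "\<dots> \<le> exp u"
      using u k by (intro exp_ge_one_plus_x_over_n_power_n) auto
    finally have "r ^ n * exp (- u) \<le> (k / c) ^ k"
      using c k by (simp add: exp_minus field_simps)
    then show ?thesis
      by (simp add: u_def)
  qed
qed

text \<open>The integrand is dominated by a multiple of the density \<open>1 / ((1 + x\<^sup>2) (1 + y\<^sup>2))\<close>.\<close>
lemma nn_integral_exp_neg_norm_powr_finite:
  fixes c m :: real
  assumes c: "c > 0" and m: "m > 0"
  shows "(\<integral>\<^sup>+ z. ennreal (exp (- c * norm (z :: complex) powr m)) \<partial>lborel) < \<infinity>"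
proof -
  obtain K where K: "\<And>r. r \<ge> 0 \<Longrightarrow> r ^ 4 * exp (- c * r powr m) \<le> K"
    using power_mult_exp_neg_powr_bounded[OF c m] by blast
  define C where "C = 2 * (1 + K)"
  have "C \<ge> 0"
    using K[of 0] by (simp add: C_def)
  define F where "F = (\<lambda>x :: real. inverse (1 + x\<^sup>2))"
  have [measurable]: "F \<in> borel_measurable borel"
    unfolding F_def by measurable
  have "exp (- c * norm z powr m) \<le> C * (F (Re z) * F (Im z))" for z :: complex
  proof -
    define E where "E = exp (- c * norm z powr m)"
    have "(1 + (Re z)\<^sup>2) * (1 + (Im z)\<^sup>2) \<le> (1 + (norm z)\<^sup>2) * (1 + (norm z)\<^sup>2)"
      by (intro mult_mono) (auto simp: cmod_power2)
    also have "\<dots> \<le> 2 * (1 + norm z ^ 4)"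
      using zero_le_power2[of "1 - (norm z)\<^sup>2"] by (simp add: power2_eq_square power4_eq_xxxx algebra_simps)
    finally have "(1 + (Re z)\<^sup>2) * (1 + (Im z)\<^sup>2) * E \<le> 2 * (1 + norm z ^ 4) * E"
      by (intro mult_right_mono) (auto simp: E_def)
    also have "\<dots> \<le> C"
      using K[of "norm z"] c by (simp add: C_def E_def algebra_simps add_mono)
    finally show ?thesis
      by (simp add: E_def F_def field_simps add_pos_nonneg)
  qed
  then have "(\<integral>\<^sup>+ z. ennreal (exp (- c * norm (z :: complex) powr m)) \<partial>lborel)
      \<le> (\<integral>\<^sup>+ z. ennreal C * (ennreal (F (Re z)) * ennreal (F (Im z))) \<partial>lborel)"
    using \<open>C \<ge> 0\<close> by (intro nn_integral_mono) (simp add: F_def flip: ennreal_mult)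
  also have "\<dots> = ennreal C * ((\<integral>\<^sup>+ x. ennreal (F x) \<partial>lborel) * (\<integral>\<^sup>+ y. ennreal (F y) \<partial>lborel))"
    by (simp add: nn_integral_cmult nn_integral_multc nn_integral_lborel_complex)
  also have "\<dots> < \<infinity>"
  proof -
    have "integrable lborel F"
      using integrable_inverse_1_plus_square by (simp add: F_def set_integrable_def)
    then have "(\<integral>\<^sup>+ x. ennreal (F x) \<partial>lborel) < \<infinity>"
      by (simp add: integrable_iff_bounded F_def)
    then show ?thesis
      by (simp add: ennreal_mult_less_top)
  qed
  finally show ?thesis .
qed

section \<open>Jensen's inequality for \<open>x powr p\<close>\<close>

lemma powr_above_tangent:
  fixes a x p :: real
  assumes a: "a \<ge> 0" and x: "x \<ge> 0" and p: "p \<ge> 1"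
  shows "p * a powr (p - 1) * x \<le> x powr p + (p - 1) * a powr p"
proof (cases "a = 0 \<or> p = 1")
  case True
  then show ?thesis using x by auto
next
  case False
  then have "p > 1" using p by simp
  define q where "q = p / (p - 1)"
  have "q > 1" "1 / p + 1 / q = 1"
    using \<open>p > 1\<close> by (simp_all add: q_def field_simps)
  then have "x * a powr (p - 1) \<le> x powr p / p + (a powr (p - 1)) powr q / q"
    using \<open>p > 1\<close> a x by (intro Youngs_inequality) auto
  also have "(a powr (p - 1)) powr q = a powr p"
    using \<open>p > 1\<close> by (simp add: powr_powr q_def)
  finally show ?thesis
    using \<open>p > 1\<close> by (simp add: q_def field_simps)
qed

lemma powr_mult_self: "a \<ge> 0 \<Longrightarrow> a powr (p - 1) * a = a powr (p :: real)"
  by (cases "a = 0") (simp_all add: powr_diff)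

lemma jensen_integral_powr:
  fixes P X :: "real \<Rightarrow> real" and p :: real
  assumes p: "p \<ge> 1"
    and P: "\<And>s. s \<in> S \<Longrightarrow> P s \<ge> 0" "(P has_integral 1) S"
    and X: "\<And>s. s \<in> S \<Longrightarrow> X s \<ge> 0"
    and int: "(\<lambda>s. P s * X s) integrable_on S" "(\<lambda>s. P s * X s powr p) integrable_on S"
  shows "(integral S (\<lambda>s. P s * X s)) powr p \<le> integral S (\<lambda>s. P s * X s powr p)"
proof -
  define A where "A = integral S (\<lambda>s. P s * X s)"
  have "A \<ge> 0"
    unfolding A_def using P X by (intro integral_nonneg int) auto
  have "p * A powr p = integral S (\<lambda>s. p * A powr (p - 1) * (P s * X s))"
    using \<open>A \<ge> 0\<close> by (simp add: A_def mult.assoc powr_mult_self)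
  also have "\<dots> \<le> integral S (\<lambda>s. P s * X s powr p + (p - 1) * A powr p * P s)"
  proof (rule integral_le)
    fix s assume "s \<in> S"
    then show "p * A powr (p - 1) * (P s * X s) \<le> P s * X s powr p + (p - 1) * A powr p * P s"
      using mult_left_mono[OF powr_above_tangent[OF \<open>A \<ge> 0\<close> X p] P(1)]
      by (simp add: algebra_simps)
  qed (use int P(2) in \<open>auto intro!: integrable_add integrable_on_mult_right\<close>)
  also have "\<dots> = integral S (\<lambda>s. P s * X s powr p) + (p - 1) * A powr p"
    using int(2) P(2) by (simp add: integral_add integrable_on_mult_right has_integral_integrable integral_unique)
  finally show ?thesis
    by (simp add: A_def algebra_simps)
qed

lemma jensen_average_powr:
  fixes x :: "'i \<Rightarrow> real"
  assumes I: "finite I" "I \<noteq> {}" and x: "\<And>i. i \<in> I \<Longrightarrow> x i \<ge> 0" and p: "p \<ge> 1"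
  shows "(sum x I / card I) powr p \<le> (\<Sum>i\<in>I. x i powr p) / card I"
proof -
  define A where "A = sum x I / card I"
  have "card I > 0"
    using I by (simp add: card_gt_0_iff)
  have "A \<ge> 0"
    using x by (simp add: A_def sum_nonneg)
  have "sum x I = card I * A"
    using \<open>card I > 0\<close> by (simp add: A_def)
  have "card I * p * A powr p = card I * p * (A powr (p - 1) * A)"
    using \<open>A \<ge> 0\<close> by (simp add: powr_mult_self)
  also have "\<dots> = p * A powr (p - 1) * sum x I"
    using \<open>sum x I = card I * A\<close> by (simp add: mult_ac)
  also have "\<dots> = (\<Sum>i\<in>I. p * A powr (p - 1) * x i)"
    by (simp add: sum_distrib_left)
  also have "\<dots> \<le> (\<Sum>i\<in>I. x i powr p + (p - 1) * A powr p)"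
    using powr_above_tangent[OF \<open>A \<ge> 0\<close> x p] by (intro sum_mono) auto
  also have "\<dots> = (\<Sum>i\<in>I. x i powr p) + card I * (p - 1) * A powr p"
    by (simp add: sum.distrib)
  finally have "card I * A powr p \<le> (\<Sum>i\<in>I. x i powr p)"
    by (simp add: algebra_simps)
  then show ?thesis
    using \<open>card I > 0\<close> by (simp add: A_def field_simps)
qed

lemma powr_add_le:
  fixes a b p :: real
  assumes "a \<ge> 0" "b \<ge> 0" "p \<ge> 0"
  shows "(a + b) powr p \<le> 2 powr p * (a powr p + b powr p)"
proof -
  have "(a + b) powr p \<le> (2 * max a b) powr p"
    using assms by (intro powr_mono2) auto
  also have "\<dots> = 2 powr p * max a b powr p"
    using assms by (simp add: powr_mult)
  also have "max a b powr p \<le> a powr p + b powr p"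
    using assms by (auto simp: max_def)
  finally show ?thesis by simp
qed

section \<open>The Poisson integral\<close>

definition poisson_kernel :: "real \<Rightarrow> real \<Rightarrow> real" where
  "poisson_kernel t s = (1 - t\<^sup>2) / (cmod (cis (2 * pi * s) - t))\<^sup>2"

lemma circlepath_0_1: "circlepath 0 1 = (\<lambda>s. cis (2 * pi * s))"
  by (simp add: circlepath cis_conv_exp fun_eq_iff mult_ac)

lemma poisson_kernel_nonneg: "0 \<le> t \<Longrightarrow> t < 1 \<Longrightarrow> poisson_kernel t s \<ge> 0"
  unfolding poisson_kernel_def by (intro divide_nonneg_nonneg) (use power_le_one[of t 2] in auto)

lemma continuous_on_poisson_kernel:
  assumes "0 \<le> t" "t < 1"
  shows "continuous_on S (poisson_kernel t)"
proof -
  have "cmod (cis (2 * pi * s) - t) \<noteq> 0" for s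
    using norm_triangle_ineq2[of "cis (2 * pi * s)" "of_real t"] assms by auto
  then show ?thesis
    unfolding poisson_kernel_def by (intro continuous_intros) auto
qed

lemma poisson_kernel_cauchy_decomposition:
  fixes t :: real and u :: complex
  assumes t: "0 \<le> t" "t < 1" and u: "norm u = 1"
  shows "u / (u - t) + t * u / (1 - t * u) = of_real ((1 - t\<^sup>2) / (cmod (u - t))\<^sup>2)"
proof -
  have "u \<noteq> 0" "u \<noteq> t"
    using u t by auto
  have "t * u \<noteq> 1"
  proof
    assume "t * u = 1"
    then have "norm (t * u) = 1" by simp
    then show False using u t by (simp add: norm_mult)
  qed
  have "cnj u = 1 / u"
    using complex_norm_square[of u] u \<open>u \<noteq> 0\<close> by (simp add: field_simps)
  then have "cnj (u - t) = (1 - t * u) / u"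
    using \<open>u \<noteq> 0\<close> by (simp add: field_simps)
  then have "complex_of_real ((cmod (u - t))\<^sup>2) = (u - t) * (1 - t * u) / u"
    by (metis complex_norm_square times_divide_eq_right)
  then have "of_real ((1 - t\<^sup>2) / (cmod (u - t))\<^sup>2) = (1 - of_real t ^ 2) / ((u - t) * (1 - t * u) / u)"
    by (metis of_real_1 of_real_diff of_real_divide of_real_power)
  also have "\<dots> = u / (u - t) + t * u / (1 - t * u)"
    using \<open>u \<noteq> 0\<close> \<open>u \<noteq> t\<close> \<open>t * u \<noteq> 1\<close> by (simp add: field_simps power2_eq_square)
  finally show ?thesis ..
qed

lemma contour_integral_cauchy_kernels:
  fixes g :: "complex \<Rightarrow> complex" and t :: real
  assumes g: "g holomorphic_on UNIV" and t: "0 \<le> t" "t < 1"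
  shows "((\<lambda>u. g u / (u - t) + g u * t / (1 - t * u)) has_contour_integral (2 * of_real pi * \<i> * g t))
    (circlepath 0 1)"
proof -
  define R where "R = 2 / (1 + t)"
  have "R > 1" "t * R < 1"
    using t by (simp_all add: R_def field_simps)
  have "1 - t * u \<noteq> 0" if "u \<in> ball 0 R" for u :: complex
  proof
    assume "1 - t * u = 0"
    then have "norm (of_real t * u) = norm (1 :: complex)"
      by simp
    then have "t * norm u = 1"
      using t by (simp add: norm_mult)
    moreover have "t * norm u \<le> t * R"
      using that t by (intro mult_left_mono) auto
    ultimately show False
      using \<open>t * R < 1\<close> by linarith
  qed
  then have "((\<lambda>u. g u * t / (1 - t * u)) has_contour_integral 0) (circlepath 0 1)"
    using \<open>R > 1\<close> g
    by (intro Cauchy_theorem_convex_simple[where S = "ball 0 R"] holomorphic_intros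
        holomorphic_on_subset[OF g]) (auto simp: path_image_circlepath_nonneg)
  moreover have "((\<lambda>u. g u / (u - t)) has_contour_integral (2 * of_real pi * \<i> * g t)) (circlepath 0 1)"
    using g t by (intro Cauchy_integral_circlepath_simple) (auto intro: holomorphic_on_subset)
  ultimately show ?thesis
    using has_contour_integral_add by fastforce
qed

lemma poisson_integral_formula:
  fixes g :: "complex \<Rightarrow> complex" and t :: real
  assumes g: "g holomorphic_on UNIV" and t: "0 \<le> t" "t < 1"
  shows "((\<lambda>s. poisson_kernel t s * g (cis (2 * pi * s))) has_integral g t) {0..1}"
proof -
  have "((\<lambda>s. (2 * of_real pi * \<i>) * (poisson_kernel t s * g (cis (2 * pi * s))))
      has_integral (2 * of_real pi * \<i>) * g t) {0..1}"
    using contour_integral_cauchy_kernels[OF g t] unfolding has_contour_integral_def circlepath_0_1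
  proof (rule has_integral_spike_eq[THEN iffD1, OF negligible_empty, rotated])
    fix s :: real
    assume "s \<in> {0..1} - {}"
    then have vd: "vector_derivative (\<lambda>s. cis (2 * pi * s)) (at s within {0..1}) = 2 * of_real pi * \<i> * cis (2 * pi * s)"
      using vector_derivative_circlepath01[of s 0 1] by (simp add: circlepath_0_1 cis_conv_exp mult_ac)
    define u where "u = cis (2 * pi * s)"
    have "(g u / (u - t) + g u * t / (1 - t * u)) * (2 * of_real pi * \<i> * u)
        = (2 * of_real pi * \<i>) * g u * (u / (u - t) + t * u / (1 - t * u))"
      by (simp add: divide_inverse distrib_left distrib_right mult_ac)
    also have "\<dots> = (2 * of_real pi * \<i>) * (poisson_kernel t s * g u)"
      using poisson_kernel_cauchy_decomposition[OF t norm_cis[of "2 * pi * s"]] by (simp add: poisson_kernel_def u_def)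
    finally show "(2 * of_real pi * \<i>) * (poisson_kernel t s * g (cis (2 * pi * s)))
        = (g (cis (2 * pi * s)) / (cis (2 * pi * s) - t) + g (cis (2 * pi * s)) * t / (1 - t * cis (2 * pi * s)))
          * vector_derivative (\<lambda>s. cis (2 * pi * s)) (at s within {0..1})"
      unfolding vd u_def by (rule sym)
  qed
  then show ?thesis
    by (simp add: has_integral_mult_right_iff)
qed

lemma poisson_kernel_has_integral:
  assumes t: "0 \<le> t" "t < 1"
  shows "(poisson_kernel t has_integral 1) {0..1}"
  using has_integral_linear[OF poisson_integral_formula[of "\<lambda>_. 1", OF _ t] bounded_linear_Re]
  by (simp add: o_def)

lemma norm_powr_le_poisson_integral:
  fixes g :: "complex \<Rightarrow> complex"
  assumes g: "g holomorphic_on UNIV" and t: "0 \<le> t" "t < 1" and p: "p \<ge> 1"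
  shows "ennreal (norm (g t) powr p)
    \<le> (\<integral>\<^sup>+ s. ennreal (poisson_kernel t s * norm (g (cis (2 * pi * s))) powr p) * indicator {0..1} s \<partial>lborel)"
proof -
  define G where "G = (\<lambda>s. norm (g (cis (2 * pi * s))))"
  have "continuous_on UNIV g"
    using g by (rule holomorphic_on_imp_continuous_on)
  then have cont: "continuous_on {0..1} (\<lambda>s. poisson_kernel t s * G s)"
    "continuous_on {0..1} (\<lambda>s. poisson_kernel t s * G s powr p)"
    using p unfolding G_def
    by (auto intro!: continuous_intros continuous_on_poisson_kernel t continuous_on_powr'
        continuous_on_compose2[of UNIV g])
  have "norm (g t) = norm (integral {0..1} (\<lambda>s. poisson_kernel t s * g (cis (2 * pi * s))))"
    using poisson_integral_formula[OF g t] by (simp add: integral_unique)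
  also have "\<dots> \<le> integral {0..1} (\<lambda>s. poisson_kernel t s * G s)"
    using poisson_integral_formula[OF g t] integrable_continuous_real[OF cont(1)]
    by (intro integral_norm_bound_integral) (auto simp: G_def norm_mult poisson_kernel_nonneg[OF t])
  finally have "norm (g t) powr p \<le> (integral {0..1} (\<lambda>s. poisson_kernel t s * G s)) powr p"
    using p by (intro powr_mono2) auto
  also have "\<dots> \<le> integral {0..1} (\<lambda>s. poisson_kernel t s * G s powr p)"
    using cont by (intro jensen_integral_powr p poisson_kernel_has_integral t integrable_continuous_real)
      (auto simp: G_def poisson_kernel_nonneg[OF t])
  also have "ennreal \<dots> = (\<integral>\<^sup>+ s. ennreal (poisson_kernel t s * G s powr p) * indicator {0..1} s \<partial>lborel)"
    using integrable_continuous_real[OF cont(2)]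
    by (intro nn_integral_has_integral_lebesgue'[symmetric] integrable_integral)
      (auto simp: G_def poisson_kernel_nonneg[OF t])
  finally show ?thesis
    by (simp add: G_def ennreal_leI)
qed

section \<open>Radial weights and dilations\<close>

definition radial_weight :: "(complex \<Rightarrow> real) \<Rightarrow> bool" where
  "radial_weight w \<longleftrightarrow>
     w \<in> borel_measurable borel \<and> (\<forall>z. w z \<ge> 0) \<and> (\<forall>c z. norm c = 1 \<longrightarrow> w (c * z) = w z)"

definition weighted_power_integral :: "(complex \<Rightarrow> real) \<Rightarrow> real \<Rightarrow> (complex \<Rightarrow> complex) \<Rightarrow> ennreal" where
  "weighted_power_integral w p f = (\<integral>\<^sup>+ z. ennreal (norm (f z) powr p * w z) \<partial>lborel)"

lemma weighted_power_integral_const: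
  assumes "radial_weight w"
  shows "weighted_power_integral w p (\<lambda>_. c) = ennreal (norm c powr p) * (\<integral>\<^sup>+ z. ennreal (w z) \<partial>lborel)"
  using assms unfolding weighted_power_integral_def radial_weight_def
  by (subst nn_integral_cmult[symmetric]) (auto simp: ennreal_mult)

text \<open>The hypothesis \<open>sub\<close> is the sub-mean-value property of \<open>u\<close> for the Poisson kernel;
  integrating against the radial weight removes the Poisson average.\<close>
lemma nn_integral_dilation_le:
  fixes u w :: "complex \<Rightarrow> real" and t :: real
  assumes [measurable]: "u \<in> borel_measurable borel" and u: "\<And>z. u z \<ge> 0"
    and w: "radial_weight w" and t: "0 \<le> t" "t < 1"
    and sub: "\<And>z. ennreal (u (of_real t * z))
      \<le> c * (\<integral>\<^sup>+ s. ennreal (poisson_kernel t s * u (cis (2 * pi * s) * z)) * indicator {0..1} s \<partial>lborel)"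
  shows "(\<integral>\<^sup>+ z. ennreal (u (of_real t * z) * w z) \<partial>lborel) \<le> c * (\<integral>\<^sup>+ z. ennreal (u z * w z) \<partial>lborel)"
proof -
  define K where "K = (\<lambda>s. ennreal (poisson_kernel t s) * indicator {0..1} s)"
  have [measurable]: "w \<in> borel_measurable borel" "poisson_kernel t \<in> borel_measurable borel"
    using w continuous_on_poisson_kernel[OF t]
    by (auto simp: radial_weight_def intro: borel_measurable_continuous_onI)
  then have [measurable]: "K \<in> borel_measurable borel"
    unfolding K_def by measurable
  have rotate: "w (cis x * z) = w z" "w (z * cis x) = w z" for x z
    using w unfolding radial_weight_def by (metis mult.commute norm_cis)+
  have "(\<integral>\<^sup>+ s. K s \<partial>lborel) = 1"
    using nn_integral_has_integral_lebesgue'[OF _ poisson_kernel_has_integral[OF t]]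
    by (simp add: K_def poisson_kernel_nonneg[OF t])
  have "(\<integral>\<^sup>+ z. ennreal (u (of_real t * z) * w z) \<partial>lborel)
      \<le> (\<integral>\<^sup>+ z. c * (\<integral>\<^sup>+ s. K s * ennreal (u (cis (2 * pi * s) * z) * w (cis (2 * pi * s) * z)) \<partial>lborel) \<partial>lborel)"
  proof (rule nn_integral_mono)
    fix z :: complex
    have "ennreal (u (of_real t * z) * w z) = ennreal (u (of_real t * z)) * ennreal (w z)"
      using u w by (simp add: radial_weight_def ennreal_mult)
    also have "\<dots> \<le> c * (\<integral>\<^sup>+ s. ennreal (poisson_kernel t s * u (cis (2 * pi * s) * z)) * indicator {0..1} s \<partial>lborel) * ennreal (w z)"
      by (intro mult_right_mono sub) simp
    also have "\<dots> = c * (\<integral>\<^sup>+ s. ennreal (poisson_kernel t s * u (cis (2 * pi * s) * z)) * indicator {0..1} s * ennreal (w z) \<partial>lborel)"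
      by (subst nn_integral_multc) (simp_all add: mult.assoc)
    also have "\<dots> = c * (\<integral>\<^sup>+ s. K s * ennreal (u (cis (2 * pi * s) * z) * w (cis (2 * pi * s) * z)) \<partial>lborel)"
      using u w poisson_kernel_nonneg[OF t]
      by (intro arg_cong[where f = "(*) c"] nn_integral_cong) (simp add: K_def radial_weight_def rotate ennreal_mult mult_ac)
    finally show "ennreal (u (of_real t * z) * w z) \<le> \<dots>" .
  qed
  also have "\<dots> = c * (\<integral>\<^sup>+ z. ennreal (u z * w z) \<partial>lborel)"
    using nn_integral_rotation_average[where F = "\<lambda>z. ennreal (u z * w z)"] \<open>(\<integral>\<^sup>+ s. K s \<partial>lborel) = 1\<close>
    by (simp add: nn_integral_cmult)
  finally show ?thesis .
qed

lemma weighted_power_integral_dilation_le: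
  fixes f :: "complex \<Rightarrow> complex" and t :: real
  assumes f: "f holomorphic_on UNIV" and p: "p \<ge> 1" and w: "radial_weight w" and t: "0 \<le> t" "t \<le> 1"
  shows "weighted_power_integral w p (\<lambda>z. f (of_real t * z)) \<le> weighted_power_integral w p f"
proof (cases "t = 1")
  case False
  have [measurable]: "f \<in> borel_measurable borel"
    using f by (rule borel_measurable_holomorphic)
  have "(\<integral>\<^sup>+ z. ennreal (norm (f (of_real t * z)) powr p * w z) \<partial>lborel)
      \<le> 1 * (\<integral>\<^sup>+ z. ennreal (norm (f z) powr p * w z) \<partial>lborel)"
  proof (rule nn_integral_dilation_le[OF _ _ w])
    fix z
    have "(\<lambda>\<zeta>. f (\<zeta> * z)) holomorphic_on UNIV"
      using f by (intro holomorphic_on_compose_gen[OF _ f, unfolded o_def] holomorphic_intros) auto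
    from norm_powr_le_poisson_integral[OF this _ _ p] t False
    show "ennreal (norm (f (of_real t * z)) powr p) \<le> 1 * (\<integral>\<^sup>+ s. ennreal (poisson_kernel t s * norm (f (cis (2 * pi * s) * z)) powr p) * indicator {0..1} s \<partial>lborel)"
      by simp
  qed (use t False in auto)
  then show ?thesis
    by (simp add: weighted_power_integral_def)
qed simp

lemma weighted_power_integral_dilation_le_vanishing:
  fixes f :: "complex \<Rightarrow> complex" and t :: real
  assumes f: "f holomorphic_on UNIV" "f 0 = 0" and p: "p \<ge> 1" and w: "radial_weight w"
    and t: "0 \<le> t" "t \<le> 1"
  shows "weighted_power_integral w p (\<lambda>z. f (of_real t * z)) \<le> ennreal (t powr p) * weighted_power_integral w p f"
proof (cases "t = 1")
  case False
  have [measurable]: "f \<in> borel_measurable borel"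
    using f by (intro borel_measurable_holomorphic)
  define q where "q = (\<lambda>z. if z = 0 then deriv f 0 else f z / z)"
  have "q = (\<lambda>z. if z = 0 then deriv f 0 else (f z - f 0) / (z - 0))"
    using f(2) by (simp add: q_def fun_eq_iff)
  then have "q holomorphic_on UNIV"
    using pole_lemma[OF f(1), of 0] by simp
  have f_eq: "f z = z * q z" for z
    using f(2) by (simp add: q_def fun_eq_iff)
  have "(\<integral>\<^sup>+ z. ennreal (norm (f (of_real t * z)) powr p * w z) \<partial>lborel)
      \<le> ennreal (t powr p) * (\<integral>\<^sup>+ z. ennreal (norm (f z) powr p * w z) \<partial>lborel)"
  proof (rule nn_integral_dilation_le[OF _ _ w])
    fix z
    define g where "g = (\<lambda>\<zeta>. z * q (\<zeta> * z))"
    have "g holomorphic_on UNIV"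
      unfolding g_def
      by (intro holomorphic_intros holomorphic_on_compose_gen[OF _ \<open>q holomorphic_on UNIV\<close>, unfolded o_def]) auto
    from norm_powr_le_poisson_integral[OF this _ _ p] t False
    have "ennreal (t powr p) * ennreal (norm (g t) powr p)
        \<le> ennreal (t powr p) * (\<integral>\<^sup>+ s. ennreal (poisson_kernel t s * norm (g (cis (2 * pi * s))) powr p) * indicator {0..1} s \<partial>lborel)"
      by (intro mult_left_mono) auto
    moreover have "norm (f (of_real t * z)) powr p = t powr p * norm (g t) powr p"
      "norm (g (cis x)) = norm (f (cis x * z))" for x
      using t by (simp_all add: f_eq g_def norm_mult powr_mult mult_ac)
    ultimately show "ennreal (norm (f (of_real t * z)) powr p)
        \<le> ennreal (t powr p) * (\<integral>\<^sup>+ s. ennreal (poisson_kernel t s * norm (f (cis (2 * pi * s) * z)) powr p) * indicator {0..1} s \<partial>lborel)"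
      using t by (simp add: ennreal_mult)
  qed (use t False in auto)
  then show ?thesis
    by (simp add: weighted_power_integral_def)
qed simp

section \<open>The Hardy operator\<close>

lemma hardy_op_eq_integral: "hardy_op f z = integral {0..1} (\<lambda>t. f (of_real t * z))"
proof (cases "z = 0")
  case False
  have "linepath 0 z t = of_real t * z" for t
    by (simp add: linepath_def scaleR_conv_of_real)
  then show ?thesis
    using False by (simp add: hardy_op_def contour_integral_integral vector_derivative_linepath_at)
qed (simp add: hardy_op_def)

lemma continuous_on_dilation:
  fixes f :: "complex \<Rightarrow> complex"
  assumes "continuous_on UNIV f"
  shows "continuous_on S (\<lambda>t. f (of_real t * z))"
  by (intro continuous_on_compose2[OF assms] continuous_intros) auto

lemma hardy_op_linear:
  assumes "continuous_on UNIV f" "continuous_on UNIV g"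
  shows "hardy_op (\<lambda>z. a * f z + b * g z) = (\<lambda>z. a * hardy_op f z + b * hardy_op g z)"
  using assms
  by (simp add: fun_eq_iff hardy_op_eq_integral integral_add integrable_on_mult_right
      integrable_continuous_real continuous_on_dilation)

lemma hardy_op_const [simp]: "hardy_op (\<lambda>_. c) = (\<lambda>_. c)"
  by (simp add: hardy_op_eq_integral fun_eq_iff)

lemma hardy_op_add_const:
  "continuous_on UNIV f \<Longrightarrow> hardy_op (\<lambda>z. f z + c) = (\<lambda>z. hardy_op f z + c)"
  using hardy_op_linear[of f "\<lambda>_. c" 1 1] by simp

text \<open>\<open>hardy_op f\<close> is the difference quotient at 0 of a primitive of \<open>f\<close>.\<close>
lemma holomorphic_on_hardy_op:
  assumes f: "f holomorphic_on UNIV"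
  shows "hardy_op f holomorphic_on UNIV"
proof -
  define F where "F = (\<lambda>z. contour_integral (linepath 0 z) f)"
  have F': "(F has_field_derivative f z) (at z)" for z
    unfolding F_def
  proof (rule triangle_contour_integrals_convex_primitive[where S = UNIV, simplified])
    show "continuous_on UNIV f"
      using f by (rule holomorphic_on_imp_continuous_on)
    fix b c :: complex
    have "(f has_contour_integral 0) (linepath 0 b +++ linepath b c +++ linepath c 0)"
      using f by (intro Cauchy_theorem_triangle) (auto intro: holomorphic_on_subset)
    then show "contour_integral (linepath 0 b) f + contour_integral (linepath b c) f + contour_integral (linepath c 0) f = 0"
      by (rule has_chain_integral_chain_integral3)
  qed
  then have "F holomorphic_on UNIV"
    by (auto simp: holomorphic_on_def field_differentiable_def)
  moreover have "hardy_op f = (\<lambda>z. if z = 0 then deriv F 0 else (F z - F 0) / (z - 0))"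
    using DERIV_imp_deriv[OF F'[of 0]] by (simp add: fun_eq_iff hardy_op_def F_def)
  ultimately show ?thesis
    using pole_lemma[of F UNIV 0] by simp
qed

lemma norm_hardy_op_powr_le:
  fixes f :: "complex \<Rightarrow> complex"
  assumes f: "continuous_on UNIV f" and p: "p \<ge> 1"
  shows "ennreal (norm (hardy_op f z) powr p)
    \<le> (\<integral>\<^sup>+ t. ennreal (norm (f (of_real t * z)) powr p) * indicator {0..1} t \<partial>lborel)"
proof -
  define F where "F = (\<lambda>t. norm (f (of_real t * z)))"
  have cont: "continuous_on {0..1} F" "continuous_on {0..1} (\<lambda>t. F t powr p)"
    using p unfolding F_def by (auto intro!: continuous_intros continuous_on_powr' continuous_on_dilation f)
  have "norm (hardy_op f z) \<le> integral {0..1} F"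
    unfolding hardy_op_eq_integral F_def
    using f cont(1) by (intro integral_norm_bound_integral integrable_continuous_real continuous_on_dilation)
      (auto simp: F_def)
  then have "norm (hardy_op f z) powr p \<le> (integral {0..1} (\<lambda>t. 1 * F t)) powr p"
    using p by (intro powr_mono2) auto
  also have "\<dots> \<le> integral {0..1} (\<lambda>t. 1 * F t powr p)"
    using cont p has_integral_const_real[of "1 :: real" 0 1]
    by (intro jensen_integral_powr integrable_continuous_real) (auto simp: F_def)
  also have "ennreal \<dots> = (\<integral>\<^sup>+ t. ennreal (F t powr p) * indicator {0..1} t \<partial>lborel)"
    using integrable_continuous_real[OF cont(2)]
    by (intro nn_integral_has_integral_lebesgue'[symmetric]) (auto intro: integrable_integral)
  finally show ?thesis
    by (simp add: F_def ennreal_leI)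
qed

lemma weighted_power_integral_hardy_op_le_kernel:
  fixes f :: "complex \<Rightarrow> complex" and K :: "real \<Rightarrow> ennreal"
  assumes f: "f holomorphic_on UNIV" and p: "p \<ge> 1" and w: "radial_weight w"
    and [measurable]: "K \<in> borel_measurable borel"
    and dilation: "\<And>t. 0 \<le> t \<Longrightarrow> t \<le> 1 \<Longrightarrow>
      weighted_power_integral w p (\<lambda>z. f (of_real t * z)) \<le> K t * weighted_power_integral w p f"
  shows "weighted_power_integral w p (hardy_op f)
    \<le> (\<integral>\<^sup>+ t. K t * indicator {0..1} t \<partial>lborel) * weighted_power_integral w p f"
proof -
  have [measurable]: "f \<in> borel_measurable borel" "w \<in> borel_measurable borel"
    using f w by (simp_all add: borel_measurable_holomorphic radial_weight_def)
  have "weighted_power_integral w p (hardy_op f)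
      \<le> (\<integral>\<^sup>+ z. \<integral>\<^sup>+ t. ennreal (norm (f (of_real t * z)) powr p * w z) * indicator {0..1} t \<partial>lborel \<partial>lborel)"
    unfolding weighted_power_integral_def
  proof (rule nn_integral_mono)
    fix z
    have "ennreal (norm (hardy_op f z) powr p * w z) = ennreal (norm (hardy_op f z) powr p) * ennreal (w z)"
      using w by (simp add: radial_weight_def ennreal_mult)
    also have "\<dots> \<le> (\<integral>\<^sup>+ t. ennreal (norm (f (of_real t * z)) powr p) * indicator {0..1} t \<partial>lborel) * ennreal (w z)"
      using f p by (intro mult_right_mono norm_hardy_op_powr_le holomorphic_on_imp_continuous_on) auto
    also have "\<dots> = (\<integral>\<^sup>+ t. ennreal (norm (f (of_real t * z)) powr p * w z) * indicator {0..1} t \<partial>lborel)"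
      using w by (subst nn_integral_multc[symmetric]) (auto simp: radial_weight_def ennreal_mult mult_ac)
    finally show "ennreal (norm (hardy_op f z) powr p * w z) \<le> \<dots>" .
  qed
  also have "\<dots> = (\<integral>\<^sup>+ t. weighted_power_integral w p (\<lambda>z. f (of_real t * z)) * indicator {0..1} t \<partial>lborel)"
    unfolding weighted_power_integral_def
    by (subst lborel_pair.Fubini') (measurable, simp add: nn_integral_multc)
  also have "\<dots> \<le> (\<integral>\<^sup>+ t. K t * indicator {0..1} t * weighted_power_integral w p f \<partial>lborel)"
    using dilation by (intro nn_integral_mono) (auto simp: indicator_def)
  also have "\<dots> = (\<integral>\<^sup>+ t. K t * indicator {0..1} t \<partial>lborel) * weighted_power_integral w p f"
    by (rule nn_integral_multc) measurable
  finally show ?thesis .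
qed

lemma weighted_power_integral_hardy_op_le:
  fixes f :: "complex \<Rightarrow> complex"
  assumes f: "f holomorphic_on UNIV" and p: "p \<ge> 1" and w: "radial_weight w"
  shows "weighted_power_integral w p (hardy_op f) \<le> weighted_power_integral w p f"
  using weighted_power_integral_hardy_op_le_kernel[OF f p w, of "\<lambda>_. 1"]
    weighted_power_integral_dilation_le[OF f p w]
  by simp

lemma weighted_power_integral_hardy_op_le_vanishing:
  fixes f :: "complex \<Rightarrow> complex"
  assumes f: "f holomorphic_on UNIV" "f 0 = 0" and p: "p \<ge> 1" and w: "radial_weight w"
  shows "weighted_power_integral w p (hardy_op f) \<le> ennreal (1 / (p + 1)) * weighted_power_integral w p f"
proof -
  have "((\<lambda>t. t powr p) has_integral 1 / (p + 1)) {0..1}"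
    using has_integral_powr_from_0[of p 1] p by simp
  then have "(\<integral>\<^sup>+ t. ennreal (t powr p) * indicator {0..1} t \<partial>lborel) = ennreal (1 / (p + 1))"
    by (intro nn_integral_has_integral_lebesgue') simp_all
  then show ?thesis
    using weighted_power_integral_hardy_op_le_kernel[OF f(1) p w, of "\<lambda>t. ennreal (t powr p)"]
      weighted_power_integral_dilation_le_vanishing[OF f p w]
    by simp
qed

lemma holomorphic_on_funpow_hardy_op:
  "f holomorphic_on UNIV \<Longrightarrow> (hardy_op ^^ k) f holomorphic_on UNIV"
  by (induction k) (auto intro: holomorphic_on_hardy_op)

lemma funpow_hardy_op_at_0 [simp]: "(hardy_op ^^ k) f 0 = f 0"
  by (induction k) (auto simp: hardy_op_def)

lemma funpow_hardy_op_add_const: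
  assumes "f holomorphic_on UNIV"
  shows "(hardy_op ^^ k) (\<lambda>z. f z + c) = (\<lambda>z. (hardy_op ^^ k) f z + c)"
  by (induction k)
    (auto simp: hardy_op_add_const holomorphic_on_imp_continuous_on holomorphic_on_funpow_hardy_op assms)

lemma weighted_power_integral_funpow_hardy_op_le:
  fixes f :: "complex \<Rightarrow> complex"
  assumes f: "f holomorphic_on UNIV" and p: "p \<ge> 1" and w: "radial_weight w"
  shows "weighted_power_integral w p ((hardy_op ^^ k) f) \<le> weighted_power_integral w p f"
  by (induction k)
    (auto intro: order.trans weighted_power_integral_hardy_op_le holomorphic_on_funpow_hardy_op f p w)

lemma weighted_power_integral_funpow_hardy_op_le_vanishing:
  fixes f :: "complex \<Rightarrow> complex"
  assumes f: "f holomorphic_on UNIV" "f 0 = 0" and p: "p \<ge> 1" and w: "radial_weight w"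
  shows "weighted_power_integral w p ((hardy_op ^^ k) f) \<le> ennreal ((1 / (p + 1)) ^ k) * weighted_power_integral w p f"
proof (induction k)
  case (Suc k)
  have "weighted_power_integral w p ((hardy_op ^^ Suc k) f)
      \<le> ennreal (1 / (p + 1)) * weighted_power_integral w p ((hardy_op ^^ k) f)"
    using f p w by (simp add: weighted_power_integral_hardy_op_le_vanishing holomorphic_on_funpow_hardy_op)
  also have "\<dots> \<le> ennreal (1 / (p + 1)) * (ennreal ((1 / (p + 1)) ^ k) * weighted_power_integral w p f)"
    by (intro mult_left_mono Suc.IH) simp
  also have "\<dots> = ennreal ((1 / (p + 1)) ^ Suc k) * weighted_power_integral w p f"
    using p by (simp add: mult.assoc[symmetric] ennreal_mult[symmetric])
  finally show ?case .
qed simp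

lemma weighted_power_integral_value_at_0_le:
  fixes f :: "complex \<Rightarrow> complex"
  assumes "f holomorphic_on UNIV" and "p \<ge> 1" and "radial_weight w"
  shows "weighted_power_integral w p (\<lambda>_. f 0) \<le> weighted_power_integral w p f"
  using weighted_power_integral_dilation_le[OF assms, of 0] by simp

lemma weighted_power_integral_sub_value_at_0:
  fixes f :: "complex \<Rightarrow> complex"
  assumes f: "f holomorphic_on UNIV" and p: "p \<ge> 1" and w: "radial_weight w"
  shows "weighted_power_integral w p (\<lambda>z. f z - f 0) \<le> ennreal (2 powr (p + 1)) * weighted_power_integral w p f"
proof -
  have [measurable]: "f \<in> borel_measurable borel" "w \<in> borel_measurable borel"
    using f w by (simp_all add: borel_measurable_holomorphic radial_weight_def)
  have "weighted_power_integral w p (\<lambda>z. f z - f 0)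
      \<le> (\<integral>\<^sup>+ z. ennreal (2 powr p) * (ennreal (norm (f z) powr p * w z) + ennreal (norm (f 0) powr p * w z)) \<partial>lborel)"
    unfolding weighted_power_integral_def
  proof (rule nn_integral_mono)
    fix z
    have "norm (f z - f 0) powr p \<le> (norm (f z) + norm (f 0)) powr p"
      using p by (intro powr_mono2 norm_triangle_ineq4) auto
    also have "\<dots> \<le> 2 powr p * (norm (f z) powr p + norm (f 0) powr p)"
      using p by (intro powr_add_le) auto
    finally have "norm (f z - f 0) powr p * w z \<le> 2 powr p * (norm (f z) powr p + norm (f 0) powr p) * w z"
      using w by (intro mult_right_mono) (auto simp: radial_weight_def)
    then have "norm (f z - f 0) powr p * w z \<le> 2 powr p * (norm (f z) powr p * w z + norm (f 0) powr p * w z)"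
      by (simp add: algebra_simps)
    then show "ennreal (norm (f z - f 0) powr p * w z)
        \<le> ennreal (2 powr p) * (ennreal (norm (f z) powr p * w z) + ennreal (norm (f 0) powr p * w z))"
      using w by (simp add: radial_weight_def ennreal_leI flip: ennreal_mult ennreal_plus)
  qed
  also have "\<dots> = ennreal (2 powr p) * (weighted_power_integral w p f + weighted_power_integral w p (\<lambda>_. f 0))"
    by (simp add: weighted_power_integral_def nn_integral_cmult nn_integral_add)
  also have "\<dots> \<le> ennreal (2 powr p) * (2 * weighted_power_integral w p f)"
    using weighted_power_integral_value_at_0_le[OF f p w] by (intro mult_left_mono) (auto simp: mult_2 add_mono)
  also have "\<dots> = ennreal (2 powr (p + 1)) * weighted_power_integral w p f"
    by (simp add: powr_add ennreal_mult mult_ac)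
  finally show ?thesis .
qed

section \<open>Cesaro means of the Hardy operator\<close>

lemma sum_power_le_one:
  fixes q :: real
  assumes "0 \<le> q" "q \<le> 1 / 2"
  shows "(\<Sum>k=1..n. q ^ k) \<le> 1"
proof -
  have "(\<Sum>k=1..n. q ^ k) \<le> (\<Sum>k=1..n. (1 / 2) ^ k)"
    using assms by (intro sum_mono power_mono) auto
  also have "(\<Sum>k=1..n. (1 / 2 :: real) ^ k) = 1 - (1 / 2) ^ n"
    by (induction n) (auto simp: power_Suc)
  finally show ?thesis
    using zero_le_power[of "1 / 2 :: real" n] by linarith
qed

lemma cesaro_mean_hardy_op_sub_value_at_0:
  assumes f: "f holomorphic_on UNIV" and n: "n \<ge> 1"
  shows "cesaro_mean hardy_op n f z - f 0 = (\<Sum>k=1..n. (hardy_op ^^ k) (\<lambda>z. f z - f 0) z) / of_nat n"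
proof -
  have "(hardy_op ^^ k) f z = (hardy_op ^^ k) (\<lambda>z. f z - f 0) z + f 0" for k
    using funpow_hardy_op_add_const[of "\<lambda>z. f z - f 0" k "f 0"] f by (simp add: holomorphic_intros)
  then show ?thesis
    using n by (simp add: cesaro_mean_def sum.distrib field_simps)
qed

lemma norm_cesaro_mean_hardy_op_sub_powr_le:
  fixes f :: "complex \<Rightarrow> complex"
  assumes f: "f holomorphic_on UNIV" and p: "p \<ge> 1" and n: "n \<ge> 1"
  shows "norm (cesaro_mean hardy_op n f z - f 0) powr p
    \<le> (\<Sum>k=1..n. norm ((hardy_op ^^ k) (\<lambda>z. f z - f 0) z) powr p / n)"
proof -
  have "norm (cesaro_mean hardy_op n f z - f 0) \<le> (\<Sum>k=1..n. norm ((hardy_op ^^ k) (\<lambda>z. f z - f 0) z)) / n"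
    using f n by (simp add: cesaro_mean_hardy_op_sub_value_at_0 norm_divide divide_right_mono norm_sum)
  then have "norm (cesaro_mean hardy_op n f z - f 0) powr p
      \<le> ((\<Sum>k=1..n. norm ((hardy_op ^^ k) (\<lambda>z. f z - f 0) z)) / n) powr p"
    using p by (intro powr_mono2) auto
  also have "\<dots> \<le> (\<Sum>k=1..n. norm ((hardy_op ^^ k) (\<lambda>z. f z - f 0) z) powr p / n)"
    using jensen_average_powr[of "{1..n}" "\<lambda>k. norm ((hardy_op ^^ k) (\<lambda>z. f z - f 0) z)" p] n p
    by (simp add: sum_divide_distrib)
  finally show ?thesis .
qed

lemma weighted_power_integral_cesaro_mean_hardy_op:
  fixes f :: "complex \<Rightarrow> complex"
  assumes f: "f holomorphic_on UNIV" and p: "p \<ge> 1" and w: "radial_weight w" and n: "n \<ge> 1"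
  shows "weighted_power_integral w p (\<lambda>z. cesaro_mean hardy_op n f z - f 0)
    \<le> ennreal (2 powr (p + 1) / n) * weighted_power_integral w p f"
proof -
  define g where "g = (\<lambda>z. f z - f 0)"
  have g: "g holomorphic_on UNIV" "g 0 = 0"
    using f by (auto simp: g_def intro!: holomorphic_intros)
  define A where "A = (\<lambda>k. (hardy_op ^^ k) g)"
  have [measurable]: "A k \<in> borel_measurable borel" "w \<in> borel_measurable borel" for k
    using w g by (simp_all add: A_def radial_weight_def borel_measurable_holomorphic holomorphic_on_funpow_hardy_op)
  have "ennreal (norm (cesaro_mean hardy_op n f z - f 0) powr p * w z)
      \<le> (\<Sum>k=1..n. ennreal (1 / n) * ennreal (norm (A k z) powr p * w z))" for z
  proof -
    have "norm (cesaro_mean hardy_op n f z - f 0) powr p * w z \<le> (\<Sum>k=1..n. norm (A k z) powr p / n * w z)"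
      using norm_cesaro_mean_hardy_op_sub_powr_le[OF f p n, of z] w unfolding sum_distrib_right[symmetric]
      by (intro mult_right_mono) (auto simp: radial_weight_def A_def g_def)
    then have "ennreal (norm (cesaro_mean hardy_op n f z - f 0) powr p * w z)
        \<le> (\<Sum>k=1..n. ennreal (norm (A k z) powr p / n * w z))"
      using w by (subst sum_ennreal) (auto simp: radial_weight_def intro: ennreal_leI)
    also have "\<dots> = (\<Sum>k=1..n. ennreal (1 / n) * ennreal (norm (A k z) powr p * w z))"
      using w by (intro sum.cong refl) (simp add: radial_weight_def ennreal_mult[symmetric])
    finally show ?thesis .
  qed
  then have "weighted_power_integral w p (\<lambda>z. cesaro_mean hardy_op n f z - f 0)
      \<le> (\<integral>\<^sup>+ z. (\<Sum>k=1..n. ennreal (1 / n) * ennreal (norm (A k z) powr p * w z)) \<partial>lborel)"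
    unfolding weighted_power_integral_def by (rule nn_integral_mono)
  also have "\<dots> = (\<Sum>k=1..n. ennreal (1 / n) * weighted_power_integral w p (A k))"
    by (simp add: weighted_power_integral_def nn_integral_sum nn_integral_cmult)
  also have "\<dots> \<le> (\<Sum>k=1..n. ennreal (1 / n) * (ennreal ((1 / (p + 1)) ^ k) * weighted_power_integral w p g))"
    unfolding A_def using g p w
    by (intro sum_mono mult_left_mono weighted_power_integral_funpow_hardy_op_le_vanishing) auto
  also have "\<dots> = ennreal (1 / n) * (\<Sum>k=1..n. ennreal ((1 / (p + 1)) ^ k)) * weighted_power_integral w p g"
    by (simp add: sum_distrib_left sum_distrib_right mult.assoc)
  also have "\<dots> = ennreal (1 / n) * ennreal (\<Sum>k=1..n. (1 / (p + 1)) ^ k) * weighted_power_integral w p g"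
    using p by (subst sum_ennreal) auto
  also have "\<dots> \<le> ennreal (1 / n) * 1 * (ennreal (2 powr (p + 1)) * weighted_power_integral w p f)"
    using p weighted_power_integral_sub_value_at_0[OF f p w] sum_power_le_one[of "1 / (p + 1)" n]
    by (intro mult_mono) (auto simp: g_def divide_simps)
  also have "\<dots> = ennreal (2 powr (p + 1) / n) * weighted_power_integral w p f"
    by (simp add: ennreal_mult[symmetric] mult.assoc[symmetric])
  finally show ?thesis .
qed

section \<open>The Fock spaces\<close>

definition fock_weight :: "real \<Rightarrow> real \<Rightarrow> real \<Rightarrow> complex \<Rightarrow> real" where
  "fock_weight p \<alpha> m z = exp (- p * \<alpha> * norm z powr m)"

lemma radial_weight_fock_weight: "radial_weight (fock_weight p \<alpha> m)"
  unfolding radial_weight_def fock_weight_def by (simp add: norm_mult)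

lemma fock_integrand_eq: "fock_integrand p \<alpha> m f z = norm (f z) powr p * fock_weight p \<alpha> m z"
  by (simp add: fock_integrand_def fock_weight_def)

lemma borel_measurable_fock_integrand [measurable]:
  assumes [measurable]: "f \<in> borel_measurable borel"
  shows "fock_integrand p \<alpha> m f \<in> borel_measurable borel"
proof -
  have "fock_integrand p \<alpha> m f = (\<lambda>z. norm (f z) powr p * exp (- p * \<alpha> * norm z powr m))"
    by (simp add: fun_eq_iff fock_integrand_def)
  then show ?thesis by simp
qed

lemma mem_fock_space_iff:
  assumes f: "f holomorphic_on UNIV"
  shows "f \<in> fock_space p \<alpha> m \<longleftrightarrow> weighted_power_integral (fock_weight p \<alpha> m) p f < \<infinity>"
proof -
  have [measurable]: "f \<in> borel_measurable borel"
    using f by (rule borel_measurable_holomorphic)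
  have "fock_integrand p \<alpha> m f \<in> borel_measurable lborel"
    by (simp add: measurable_lborel1)
  then show ?thesis
    using f by (simp add: fock_space_def integrable_iff_bounded weighted_power_integral_def fock_integrand_eq fock_weight_def)
qed

lemma fock_norm_eq:
  assumes [measurable]: "f \<in> borel_measurable borel"
  shows "fock_norm p \<alpha> m f = enn2real (weighted_power_integral (fock_weight p \<alpha> m) p f) powr (1 / p)"
proof -
  have "fock_integrand p \<alpha> m f \<in> borel_measurable lborel"
    by (simp add: measurable_lborel1)
  then show ?thesis
    by (simp add: fock_norm_def integral_eq_nn_integral weighted_power_integral_def fock_integrand_eq fock_weight_def)
qed

lemma fock_norm_le:
  assumes [measurable]: "f \<in> borel_measurable borel" "g \<in> borel_measurable borel"
    and le: "weighted_power_integral (fock_weight p \<alpha> m) p g \<le> ennreal K * weighted_power_integral (fock_weight p \<alpha> m) p f"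
    and fin: "weighted_power_integral (fock_weight p \<alpha> m) p f < \<infinity>" and K: "K \<ge> 0" and p: "p > 0"
  shows "fock_norm p \<alpha> m g \<le> K powr (1 / p) * fock_norm p \<alpha> m f"
proof -
  have "enn2real (weighted_power_integral (fock_weight p \<alpha> m) p g)
      \<le> K * enn2real (weighted_power_integral (fock_weight p \<alpha> m) p f)"
    using enn2real_mono[OF le] fin K by (simp add: ennreal_mult_less_top enn2real_mult)
  then have "enn2real (weighted_power_integral (fock_weight p \<alpha> m) p g) powr (1 / p)
      \<le> (K * enn2real (weighted_power_integral (fock_weight p \<alpha> m) p f)) powr (1 / p)"
    using p by (intro powr_mono2) auto
  then show ?thesis
    using K by (simp add: fock_norm_eq powr_mult)
qed

lemma fock_opnorm_le:
  assumes "C \<ge> 0" "\<And>f. f \<in> fock_space p \<alpha> m \<Longrightarrow> fock_norm p \<alpha> m (T f) \<le> C * fock_norm p \<alpha> m f"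
  shows "fock_opnorm p \<alpha> m T \<le> C"
  unfolding fock_opnorm_def using assms by (intro cInf_lower bdd_belowI[of _ 0]) auto

lemma fock_opnorm_nonneg:
  assumes "C \<ge> 0" "\<And>f. f \<in> fock_space p \<alpha> m \<Longrightarrow> fock_norm p \<alpha> m (T f) \<le> C * fock_norm p \<alpha> m f"
  shows "fock_opnorm p \<alpha> m T \<ge> 0"
  unfolding fock_opnorm_def using assms by (intro cInf_greatest) auto

context
  fixes p \<alpha> m :: real
  assumes p: "1 \<le> p" and \<alpha>: "0 < \<alpha>" and m: "0 < m"
begin

abbreviation fock_power_integral :: "(complex \<Rightarrow> complex) \<Rightarrow> ennreal" where
  "fock_power_integral \<equiv> weighted_power_integral (fock_weight p \<alpha> m) p"

lemma nn_integral_fock_weight: "(\<integral>\<^sup>+ z. ennreal (fock_weight p \<alpha> m z) \<partial>lborel) < \<infinity>"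
  using nn_integral_exp_neg_norm_powr_finite[of "p * \<alpha>" m] p \<alpha> m by (simp add: fock_weight_def)

lemma fock_space_holomorphic: "f \<in> fock_space p \<alpha> m \<Longrightarrow> f holomorphic_on UNIV"
  by (simp add: fock_space_def)

lemma fock_space_finite: "f \<in> fock_space p \<alpha> m \<Longrightarrow> fock_power_integral f < \<infinity>"
  using mem_fock_space_iff fock_space_holomorphic by blast

lemma const_mem_fock_space: "(\<lambda>_. c) \<in> fock_space p \<alpha> m"
  using nn_integral_fock_weight
  by (simp add: mem_fock_space_iff weighted_power_integral_const radial_weight_fock_weight ennreal_mult_less_top)

lemma fock_norm_mono:
  assumes f: "f \<in> fock_space p \<alpha> m" and g: "g holomorphic_on UNIV"
    and le: "fock_power_integral g \<le> fock_power_integral f"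
  shows "fock_norm p \<alpha> m g \<le> fock_norm p \<alpha> m f"
  using fock_norm_le[of f g p \<alpha> m 1] le fock_space_finite[OF f] p
  by (simp add: borel_measurable_holomorphic fock_space_holomorphic f g)

lemma fock_power_integral_hardy_op_le: "f \<in> fock_space p \<alpha> m \<Longrightarrow> fock_power_integral (hardy_op f) \<le> fock_power_integral f"
  by (intro weighted_power_integral_hardy_op_le fock_space_holomorphic radial_weight_fock_weight p)

lemma hardy_op_mem_fock_space: "f \<in> fock_space p \<alpha> m \<Longrightarrow> hardy_op f \<in> fock_space p \<alpha> m"
  using fock_power_integral_hardy_op_le[of f] fock_space_finite[of f]
  by (simp add: mem_fock_space_iff holomorphic_on_hardy_op fock_space_holomorphic)

lemma fock_norm_hardy_op_le: "f \<in> fock_space p \<alpha> m \<Longrightarrow> fock_norm p \<alpha> m (hardy_op f) \<le> fock_norm p \<alpha> m f"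
  by (intro fock_norm_mono fock_power_integral_hardy_op_le holomorphic_on_hardy_op fock_space_holomorphic)

lemma fock_bounded_op_hardy_op: "fock_bounded_op p \<alpha> m hardy_op"
  unfolding fock_bounded_op_def
proof (intro conjI ballI allI exI[of _ 1])
  fix f g assume "f \<in> fock_space p \<alpha> m" "g \<in> fock_space p \<alpha> m"
  then show "hardy_op (\<lambda>z. a * f z + b * g z) = (\<lambda>z. a * hardy_op f z + b * hardy_op g z)" for a b
    by (intro hardy_op_linear holomorphic_on_imp_continuous_on fock_space_holomorphic)
qed (use hardy_op_mem_fock_space fock_norm_hardy_op_le in auto)

lemma fock_norm_one_pos: "fock_norm p \<alpha> m (\<lambda>_. 1) > 0"
proof -
  have "(\<integral>\<^sup>+ z. ennreal (fock_weight p \<alpha> m z) \<partial>lborel) > 0"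
    by (intro nn_integral_lborel_pos) (auto simp: fock_weight_def)
  then show ?thesis
    using nn_integral_fock_weight p
    by (simp add: fock_norm_eq weighted_power_integral_const radial_weight_fock_weight enn2real_eq_0_iff
        less_top[symmetric])
qed

lemma fock_opnorm_hardy_op: "fock_opnorm p \<alpha> m hardy_op = 1"
proof (rule antisym)
  show "fock_opnorm p \<alpha> m hardy_op \<le> 1"
    using fock_norm_hardy_op_le by (intro fock_opnorm_le) auto
  have "1 \<le> C" if "C \<in> {C. 0 \<le> C \<and> (\<forall>f \<in> fock_space p \<alpha> m. fock_norm p \<alpha> m (hardy_op f) \<le> C * fock_norm p \<alpha> m f)}" for C
    using that const_mem_fock_space[of 1] fock_norm_one_pos by auto
  then show "1 \<le> fock_opnorm p \<alpha> m hardy_op"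
    unfolding fock_opnorm_def using fock_norm_hardy_op_le by (intro cInf_greatest) (auto intro!: exI[of _ 1])
qed

lemma funpow_hardy_op_mem_fock_space:
  assumes "f \<in> fock_space p \<alpha> m"
  shows "(hardy_op ^^ k) f \<in> fock_space p \<alpha> m"
    and "fock_norm p \<alpha> m ((hardy_op ^^ k) f) \<le> fock_norm p \<alpha> m f"
proof -
  have "fock_power_integral ((hardy_op ^^ k) f) \<le> fock_power_integral f"
    using assms p by (intro weighted_power_integral_funpow_hardy_op_le fock_space_holomorphic radial_weight_fock_weight)
  then show "(hardy_op ^^ k) f \<in> fock_space p \<alpha> m" "fock_norm p \<alpha> m ((hardy_op ^^ k) f) \<le> fock_norm p \<alpha> m f"
    using assms fock_space_finite[OF assms]
    by (auto simp: mem_fock_space_iff holomorphic_on_funpow_hardy_op fock_space_holomorphic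
        intro!: fock_norm_mono)
qed

lemma power_bounded_hardy_op: "power_bounded p \<alpha> m hardy_op"
  unfolding power_bounded_def
  using fock_bounded_op_hardy_op funpow_hardy_op_mem_fock_space(2)
  by (auto intro!: bdd_aboveI[of _ 1] fock_opnorm_le)

lemma fock_bounded_op_value_at_0: "fock_bounded_op p \<alpha> m (\<lambda>f _. f 0)"
  unfolding fock_bounded_op_def
proof (intro conjI ballI allI exI[of _ 1])
  fix f assume "f \<in> fock_space p \<alpha> m"
  then show "fock_norm p \<alpha> m (\<lambda>_. f 0) \<le> 1 * fock_norm p \<alpha> m f"
    using p by (auto intro!: fock_norm_mono weighted_power_integral_value_at_0_le fock_space_holomorphic
        radial_weight_fock_weight const_mem_fock_space)
qed (simp_all add: const_mem_fock_space)

lemma fock_norm_cesaro_mean_hardy_op_sub_le: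
  assumes f: "f \<in> fock_space p \<alpha> m" and n: "n \<ge> 1"
  shows "fock_norm p \<alpha> m (\<lambda>z. cesaro_mean hardy_op n f z - f 0)
    \<le> (2 powr (p + 1) / n) powr (1 / p) * fock_norm p \<alpha> m f"
proof (rule fock_norm_le)
  have [measurable]: "(hardy_op ^^ k) f \<in> borel_measurable borel" for k
    using f by (intro borel_measurable_holomorphic holomorphic_on_funpow_hardy_op fock_space_holomorphic)
  then show "(\<lambda>z. cesaro_mean hardy_op n f z - f 0) \<in> borel_measurable borel"
    unfolding cesaro_mean_def by measurable
  show "f \<in> borel_measurable borel"
    using f by (intro borel_measurable_holomorphic fock_space_holomorphic)
qed (use p f n weighted_power_integral_cesaro_mean_hardy_op[OF fock_space_holomorphic[OF f] p radial_weight_fock_weight n]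
    fock_space_finite in auto)

lemma cesaro_mean_hardy_op_tendsto:
  "(\<lambda>n. fock_opnorm p \<alpha> m (\<lambda>f z. cesaro_mean hardy_op n f z - f 0)) \<longlonglongrightarrow> 0"
proof (rule tendsto_sandwich)
  define B where "B = (\<lambda>n::nat. (2 powr (p + 1) / n) powr (1 / p))"
  have "0 \<le> fock_opnorm p \<alpha> m (\<lambda>f z. cesaro_mean hardy_op n f z - f 0)"
    "fock_opnorm p \<alpha> m (\<lambda>f z. cesaro_mean hardy_op n f z - f 0) \<le> B n" if "n \<ge> 1" for n
    using fock_norm_cesaro_mean_hardy_op_sub_le[OF _ that]
    by (auto simp: B_def intro!: fock_opnorm_le fock_opnorm_nonneg[of "B n"])
  then show "eventually (\<lambda>n. 0 \<le> fock_opnorm p \<alpha> m (\<lambda>f z. cesaro_mean hardy_op n f z - f 0)) sequentially"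
    "eventually (\<lambda>n. fock_opnorm p \<alpha> m (\<lambda>f z. cesaro_mean hardy_op n f z - f 0) \<le> B n) sequentially"
    by (auto intro: eventually_sequentiallyI[of 1])
  show "B \<longlonglongrightarrow> 0"
    unfolding B_def using p
    by (intro tendsto_zero_powrI lim_const_over_n tendsto_const) auto
qed simp

end

theorem theorem4:
  fixes p \<alpha> m :: real
  assumes "1 \<le> p" and "0 < \<alpha>" and "0 < m"
  shows "fock_bounded_op p \<alpha> m hardy_op \<and> fock_opnorm p \<alpha> m hardy_op = 1 \<and>
         power_bounded p \<alpha> m hardy_op \<and> uniformly_mean_ergodic p \<alpha> m hardy_op"
  using fock_bounded_op_hardy_op[OF assms] fock_opnorm_hardy_op[OF assms] power_bounded_hardy_op[OF assms]
    fock_bounded_op_value_at_0[OF assms] cesaro_mean_hardy_op_tendsto[OF assms]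
  by (auto simp: uniformly_mean_ergodic_def)

end
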